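(* For all integers $0\le k\le j$, $$\sum_{h=k}^j(-q)^{h-j}q^{k^2}{h\brack k}_+\,a^{-j}q^{j^2+h^2}\frac{(a^2q^{2-2j-2h};q^2)_j}{(q^2;q^2)_j}{j\brack h}_+=(-q)^{k-j}a^{-j}q^{2k^2+j^2}{j\brack k}_+\frac{(a^2q^{2-2j-2k};q^2)_k}{(q^2;q^2)_k}.$$
   Context: $(x;q^2)_n=\prod_{i=0}^{n-1}(1-xq^{2i})$, $(q^2;q^2)_n=\prod_{i=1}^n(1-q^{2i})$, and ${N\brack k}_+=\frac{(q^2;q^2)_N}{(q^2;q^2)_k(q^2;q^2)_{N-k}}$. (The identity expresses the reduced closure of a top twist applied to the basis web $UP[j,k]$.) *)

theory Defs
  imports Complex_Main
begin

definition qpoch2 :: "'a::field \<Rightarrow> 'a \<Rightarrow> nat \<Rightarrow> 'a" where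
  "qpoch2 x q n = (\<Prod>i<n. (1 - x * q ^ (2 * i)))"

definition qfact2 :: "'a::field \<Rightarrow> nat \<Rightarrow> 'a" where
  "qfact2 q n = (\<Prod>i=1..n. (1 - q ^ (2 * i)))"

text \<open>Gaussian binomial [N,k]_+ in base q^2 (used only for k \<le> N)\<close>
definition qbinp :: "'a::field \<Rightarrow> nat \<Rightarrow> nat \<Rightarrow> 'a" where
  "qbinp q N k = qfact2 q N / (qfact2 q k * qfact2 q (N - k))"

end

theory Submission imports Defs begin

(*
  Put h = k + m and j = k + n. Since [h,k] [j,h] = [j,k] [n,m], the identity reduces to

    sum_m [n,m] q^(m(m-1)) (-q^(2k+2))^m (y q^(-2m); q^2)_j = (q^2;q^2)_j / (q^2;q^2)_k (y; q^2)_k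

  with y = a^2 q^(2-2j-2k). Expanding (y q^(-2m); q^2)_j by the q-binomial theorem and exchanging
  the sums, the inner sum over m becomes the q-binomial expansion of (q^(2k+2-2s); q^2)_n. It vanishes
  for k < s <= j and equals (q^2;q^2)_(j-s) / (q^2;q^2)_(k-s) for s <= k; what remains is the
  q-binomial expansion of (y; q^2)_k.
*)

abbreviation q2_not_root_of_unity :: "'a::field \<Rightarrow> bool" where
  "q2_not_root_of_unity q \<equiv> \<forall>i::nat. i \<ge> 1 \<longrightarrow> q ^ (2 * i) \<noteq> 1"

lemma power_int_diff_nat:
  fixes x :: "'a::field"
  assumes "x \<noteq> 0"
  shows "x powi (t - int n) = x powi t * inverse x ^ n"
  using assms by (simp add: power_int_diff divide_inverse power_inverse)

lemma qfact2_0 [simp]: "qfact2 q 0 = 1"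
  by (simp add: qfact2_def)

lemma qfact2_Suc: "qfact2 q (Suc n) = qfact2 q n * (1 - q ^ (2 * Suc n))"
  by (simp add: qfact2_def prod.nat_ivl_Suc')

lemma qfact2_nonzero:
  assumes "q2_not_root_of_unity q"
  shows "qfact2 q n \<noteq> 0"
  using assms by (induction n) (auto simp: qfact2_Suc)

lemma qfact2_add: "qfact2 q (d + n) = qfact2 q d * qpoch2 (q ^ (2 * Suc d)) q n"
  by (induction n) (simp_all add: qfact2_Suc qpoch2_def power_add[symmetric] ac_simps)

lemma qpoch2_Suc_shift: "qpoch2 x q (Suc n) = (1 - x) * qpoch2 (x * q\<^sup>2) q n"
  unfolding qpoch2_def
  by (subst prod.lessThan_Suc_shift) (simp add: power_add[symmetric] mult.assoc)

lemma qpoch2_inverse_power_eq_0: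
  assumes "q \<noteq> 0" and "i < n"
  shows "qpoch2 (inverse q ^ (2 * i)) q n = 0"
  unfolding qpoch2_def using assms
  by (intro prod_zero bexI[of _ i]) (simp_all add: power_mult_distrib[symmetric])

lemma qbinp_self:
  assumes "q2_not_root_of_unity q"
  shows "qbinp q n n = 1"
  using qfact2_nonzero[OF assms] by (simp add: qbinp_def)

lemma qbinp_0_right:
  assumes "q2_not_root_of_unity q"
  shows "qbinp q n 0 = 1"
  using qfact2_nonzero[OF assms] by (simp add: qbinp_def)

lemma qbinp_Suc_Suc:
  assumes H: "q2_not_root_of_unity q" and "m < n"
  shows "qbinp q (Suc n) (Suc m) = qbinp q n m + q ^ (2 * Suc m) * qbinp q n (Suc m)"
proof -
  obtain d where n: "n = m + Suc d"
    using less_imp_Suc_add[OF \<open>m < n\<close>] by auto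
  define X where "X = q ^ (2 * Suc m)"
  define Y where "Y = q ^ (2 * Suc d)"
  have diffs: "Suc n - Suc m = Suc d" "n - m = Suc d" "n - Suc m = d"
    using n by auto
  have XY: "q ^ (2 * Suc n) = X * Y"
    unfolding X_def Y_def n by (simp add: power_add[symmetric])
  have "X \<noteq> 1" "Y \<noteq> 1"
    unfolding X_def Y_def using H[rule_format, of "Suc m"] H[rule_format, of "Suc d"] by simp_all
  then have nonzero: "qfact2 q m \<noteq> 0" "qfact2 q d \<noteq> 0" "1 - X \<noteq> 0" "1 - Y \<noteq> 0"
    using qfact2_nonzero[OF H] by simp_all
  have "qbinp q n m + X * qbinp q n (Suc m)
      = (qfact2 q n * (1 - X) + X * qfact2 q n * (1 - Y)) / (qfact2 q m * (1 - X) * (qfact2 q d * (1 - Y)))"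
    unfolding qbinp_def diffs qfact2_Suc[of q m] qfact2_Suc[of q d] X_def[symmetric] Y_def[symmetric]
    using nonzero by (simp add: add_divide_distrib)
  also have "qfact2 q n * (1 - X) + X * qfact2 q n * (1 - Y) = qfact2 q n * (1 - X * Y)"
    by (simp add: algebra_simps)
  also have "qfact2 q n * (1 - X * Y) / (qfact2 q m * (1 - X) * (qfact2 q d * (1 - Y))) = qbinp q (Suc n) (Suc m)"
    unfolding qbinp_def diffs qfact2_Suc[of q n] qfact2_Suc[of q m] qfact2_Suc[of q d] XY
      X_def[symmetric] Y_def[symmetric] ..
  finally show ?thesis
    unfolding X_def by simp
qed

lemma qbinp_mult_qbinp:
  assumes H: "q2_not_root_of_unity q" and "k \<le> h" and "h \<le> j"
  shows "qbinp q h k * qbinp q j h = qbinp q j k * qbinp q (j - k) (h - k)"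
proof -
  have "j - k - (h - k) = j - h"
    using assms by simp
  then show ?thesis
    using qfact2_nonzero[OF H] by (simp add: qbinp_def field_simps)
qed

lemma qbinp_mult_qfact2_quotient:
  assumes H: "q2_not_root_of_unity q" and "s \<le> k" and "k \<le> j"
  shows "qbinp q j s * (qfact2 q (j - s) / qfact2 q (k - s)) = qfact2 q j / qfact2 q k * qbinp q k s"
  using qfact2_nonzero[OF H] by (simp add: qbinp_def field_simps)

(* Pascal recursion for [n,m]_+: unlike qbinp it vanishes for m > n and needs no hypothesis on q. *)
fun gauss_binom :: "'a::field \<Rightarrow> nat \<Rightarrow> nat \<Rightarrow> 'a" where
  "gauss_binom q 0 m = (if m = 0 then 1 else 0)"
| "gauss_binom q (Suc n) 0 = 1"
| "gauss_binom q (Suc n) (Suc m) = gauss_binom q n m + q ^ (2 * Suc m) * gauss_binom q n (Suc m)"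

lemma gauss_binom_eq_0: "n < m \<Longrightarrow> gauss_binom q n m = 0"
  by (induction q n m rule: gauss_binom.induct) auto

lemma gauss_binom_0_right [simp]: "gauss_binom q n 0 = 1"
  by (cases n) auto

lemma gauss_binom_eq_qbinp:
  assumes H: "q2_not_root_of_unity q" and "m \<le> n"
  shows "gauss_binom q n m = qbinp q n m"
  using \<open>m \<le> n\<close>
proof (induction n arbitrary: m)
  case 0
  then show ?case by (simp add: qbinp_0_right[OF H])
next
  case (Suc n)
  show ?case
  proof (cases m)
    case 0
    then show ?thesis by (simp add: qbinp_0_right[OF H])
  next
    case (Suc m')
    show ?thesis
    proof (cases "m' = n")
      case True
      then show ?thesis
        using Suc.IH[of n] by (simp add: Suc gauss_binom_eq_0 qbinp_self[OF H])
    next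
      case False
      then have "m' < n" using Suc Suc.prems by simp
      then show ?thesis
        using Suc.IH[of m'] Suc.IH[of "Suc m'"] by (simp add: Suc qbinp_Suc_Suc[OF H])
    qed
  qed
qed

lemma gauss_binom_expansion:
  "qpoch2 (- z) q n = (\<Sum>m\<le>n. gauss_binom q n m * q ^ (m * (m - 1)) * z ^ m)"
proof (induction n arbitrary: z)
  case 0
  then show ?case by (simp add: qpoch2_def)
next
  case (Suc n)
  define f where "f m = gauss_binom q n m * q ^ (m * (m + 1)) * z ^ m" for m
  have shift: "gauss_binom q n m * q ^ (m * (m - 1)) * (z * q\<^sup>2) ^ m = f m" for m
  proof -
    have "q ^ (m * (m - 1)) * (q\<^sup>2) ^ m = q ^ (m * (m - 1) + 2 * m)"
      by (simp only: power_mult[symmetric] power_add)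
    also have "m * (m - 1) + 2 * m = m * (m + 1)"
      by (cases m) auto
    finally have "q ^ (m * (m - 1)) * (q\<^sup>2) ^ m = q ^ (m * (m + 1))" .
    then show ?thesis
      unfolding f_def by (simp add: power_mult_distrib ac_simps)
  qed
  have pascal: "gauss_binom q (Suc n) (Suc m) * q ^ (Suc m * m) * z ^ Suc m = z * f m + f (Suc m)" for m
  proof -
    have "q ^ (2 * Suc m) * q ^ (Suc m * m) = q ^ (2 * Suc m + Suc m * m)"
      by (simp only: power_add)
    also have "2 * Suc m + Suc m * m = Suc m * (Suc m + 1)"
      by simp
    finally have step: "q ^ (2 * Suc m) * q ^ (Suc m * m) = q ^ (Suc m * (Suc m + 1))" .
    have "m * (m + 1) = Suc m * m"
      by simp
    then have lower: "z * f m = gauss_binom q n m * q ^ (Suc m * m) * z ^ Suc m"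
      unfolding f_def by (simp only: power_Suc ac_simps)
    have upper: "f (Suc m) = gauss_binom q n (Suc m) * (q ^ (2 * Suc m) * q ^ (Suc m * m)) * z ^ Suc m"
      unfolding f_def step ..
    show ?thesis
      unfolding gauss_binom.simps(3) lower upper by (simp only: distrib_left distrib_right ac_simps)
  qed
  have "qpoch2 (- z) q (Suc n) = (1 + z) * qpoch2 (- (z * q\<^sup>2)) q n"
    by (simp add: qpoch2_Suc_shift)
  also have "\<dots> = (1 + z) * (\<Sum>m\<le>n. f m)"
    unfolding Suc.IH shift ..
  also have "\<dots> = z * (\<Sum>m\<le>n. f m) + (\<Sum>m\<le>Suc n. f m)"
    by (simp add: algebra_simps f_def gauss_binom_eq_0)
  also have "\<dots> = f 0 + (\<Sum>m\<le>n. z * f m + f (Suc m))"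
    unfolding sum.atMost_Suc_shift[of f n] sum.distrib sum_distrib_left by (simp only: ac_simps)
  also have "\<dots> = (\<Sum>m\<le>Suc n. gauss_binom q (Suc n) m * q ^ (m * (m - 1)) * z ^ m)"
    unfolding sum.atMost_Suc_shift[of _ n] pascal[symmetric] by (simp add: f_def)
  finally show ?case .
qed

theorem q_binomial_theorem:
  assumes "q2_not_root_of_unity q"
  shows "qpoch2 x q n = (\<Sum>m\<le>n. qbinp q n m * q ^ (m * (m - 1)) * (- x) ^ m)"
  using gauss_binom_expansion[of "- x" q n] gauss_binom_eq_qbinp[OF assms] by simp

lemma qpoch2_shifted_sum:
  assumes H: "q2_not_root_of_unity q" and "q \<noteq> 0"
  shows "(\<Sum>m\<le>n. qbinp q n m * q ^ (m * (m - 1)) * (- (q ^ (2 * k + 2))) ^ m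
                   * qpoch2 (y * inverse q ^ (2 * m)) q (k + n))
       = qfact2 q (k + n) / qfact2 q k * qpoch2 y q k"
proof -
  define j where "j = k + n"
  define b where "b s = qbinp q j s * q ^ (s * (s - 1)) * (- y) ^ s" for s
  define c where "c m = qbinp q n m * q ^ (m * (m - 1)) * (- (q ^ (2 * k + 2))) ^ m" for m
  define E where "E s = qpoch2 (q ^ (2 * k + 2) * inverse q ^ (2 * s)) q n" for s
  have "k \<le> j"
    unfolding j_def by simp
  have power_swap: "(- (y * inverse q ^ (2 * m))) ^ s = (- y) ^ s * (inverse q ^ (2 * s)) ^ m" for m s
  proof -
    have "(inverse q ^ (2 * m)) ^ s = (inverse q ^ (2 * s)) ^ m"
      by (simp only: power_mult[symmetric] mult.commute mult.left_commute)
    then show ?thesis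
      by (simp only: minus_mult_left power_mult_distrib)
  qed
  have outer: "qpoch2 (y * inverse q ^ (2 * m)) q j = (\<Sum>s\<le>j. b s * (inverse q ^ (2 * s)) ^ m)" for m
    unfolding q_binomial_theorem[OF H] b_def power_swap by (simp only: ac_simps)
  have inner: "(\<Sum>m\<le>n. c m * (inverse q ^ (2 * s)) ^ m) = E s" for s
    unfolding E_def q_binomial_theorem[OF H] c_def minus_mult_left power_mult_distrib by (simp only: ac_simps)
  have vanish: "E s = 0" if "k < s" "s \<le> j" for s
  proof -
    have "2 * s = (2 * k + 2) + 2 * (s - k - 1)"
      using that by simp
    then have power_split: "q ^ (2 * s) = q ^ (2 * k + 2) * q ^ (2 * (s - k - 1))"
      by (subst (1) \<open>2 * s = _\<close>) (rule power_add)
    have "q ^ (2 * k + 2) * inverse q ^ (2 * s) = inverse q ^ (2 * (s - k - 1))"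
      unfolding power_inverse power_split using \<open>q \<noteq> 0\<close> by (simp add: field_simps)
    then show ?thesis
      using that qpoch2_inverse_power_eq_0[OF \<open>q \<noteq> 0\<close>] unfolding E_def j_def by simp
  qed
  have survive: "E s = qfact2 q (j - s) / qfact2 q (k - s)"
    if "s \<le> k" for s
  proof -
    have "2 * k + 2 = 2 * Suc (k - s) + 2 * s"
      using that by simp
    then have power_split: "q ^ (2 * k + 2) = q ^ (2 * Suc (k - s)) * q ^ (2 * s)"
      by (subst (1) \<open>2 * k + 2 = _\<close>) (rule power_add)
    have argument: "q ^ (2 * k + 2) * inverse q ^ (2 * s) = q ^ (2 * Suc (k - s))"
      unfolding power_inverse power_split using \<open>q \<noteq> 0\<close> by simp
    have "j - s = (k - s) + n"
      using that unfolding j_def by simp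
    then have "qfact2 q (j - s) = qfact2 q (k - s) * qpoch2 (q ^ (2 * Suc (k - s))) q n"
      by (simp only: qfact2_add)
    then show ?thesis
      unfolding E_def argument using qfact2_nonzero[OF H] by simp
  qed
  have "(\<Sum>m\<le>n. c m * qpoch2 (y * inverse q ^ (2 * m)) q j)
      = (\<Sum>s\<le>j. b s * E s)"
    unfolding outer inner[symmetric] sum_distrib_left
    by (subst sum.swap) (simp add: ac_simps)
  also have "\<dots> = (\<Sum>s\<le>k. b s * E s)"
    by (rule sum.mono_neutral_right) (auto simp: j_def vanish[unfolded j_def])
  also have "\<dots> = (\<Sum>s\<le>k. qfact2 q j / qfact2 q k * (qbinp q k s * q ^ (s * (s - 1)) * (- y) ^ s))"
  proof (intro sum.cong refl)
    fix s
    assume "s \<in> {..k}"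
    then have "s \<le> k" by simp
    have "b s * E s = qbinp q j s * (qfact2 q (j - s) / qfact2 q (k - s)) * (q ^ (s * (s - 1)) * (- y) ^ s)"
      unfolding b_def survive[OF \<open>s \<le> k\<close>] by (simp only: ac_simps)
    then show "b s * E s = qfact2 q j / qfact2 q k * (qbinp q k s * q ^ (s * (s - 1)) * (- y) ^ s)"
      unfolding qbinp_mult_qfact2_quotient[OF H \<open>s \<le> k\<close> \<open>k \<le> j\<close>]
      by (simp only: ac_simps)
  qed
  finally show ?thesis
    unfolding c_def j_def q_binomial_theorem[OF H, of y k] sum_distrib_left .
qed

lemma summand_factorization:
  fixes a q :: "'a::field"
  assumes H: "q2_not_root_of_unity q" and "q \<noteq> 0"
    and j: "j = k + n" and "m \<le> n"
  shows "(-q) powi (int (k + m) - int j) * q ^ (k^2) * qbinp q (k + m) k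
            * a powi (- int j) * q ^ (j^2 + (k + m)^2)
            * qpoch2 (a^2 * q powi (2 - 2 * int j - 2 * int (k + m))) q j / qfact2 q j
            * qbinp q j (k + m)
       = (-q) powi (int k - int j) * a powi (- int j) * q ^ (2 * k^2 + j^2) * qbinp q j k / qfact2 q j
            * (qbinp q n m * q ^ (m * (m - 1)) * (- (q ^ (2 * k + 2))) ^ m
               * qpoch2 (a^2 * q powi (2 - 2 * int j - 2 * int k) * inverse q ^ (2 * m)) q j)"
    (is "_ = ?rhs")
proof -
  have sign: "(-q) powi (int (k + m) - int j) = (-q) powi (int k - int j) * (-q) ^ m"
  proof -
    have "int (k + m) - int j = (int k - int j) + int m"
      by simp
    then show ?thesis
      using \<open>q \<noteq> 0\<close> by (simp only:) (subst power_int_add, simp_all)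
  qed
  have "2 - 2 * int j - 2 * int (k + m) = (2 - 2 * int j - 2 * int k) - int (2 * m)"
    by simp
  then have "q powi (2 - 2 * int j - 2 * int (k + m))
           = q powi (2 - 2 * int j - 2 * int k) * inverse q ^ (2 * m)"
    using power_int_diff_nat[OF \<open>q \<noteq> 0\<close>] by (simp only:)
  then have shift: "a^2 * q powi (2 - 2 * int j - 2 * int (k + m))
             = a^2 * q powi (2 - 2 * int j - 2 * int k) * inverse q ^ (2 * m)"
    by (simp only: mult.assoc)
  have exponents: "m + (j^2 + (k + m)^2) + k^2 = (2 * k^2 + j^2) + m * (m - 1) + (2 * k + 2) * m"
    by (cases m) (simp_all add: power2_eq_square algebra_simps)
  have "(-q) ^ m * q ^ (j^2 + (k + m)^2) * q ^ (k^2)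
      = (-1) ^ m * (q ^ m * q ^ (j^2 + (k + m)^2) * q ^ (k^2))"
    unfolding power_minus[of q] by (simp only: ac_simps)
  also have "q ^ m * q ^ (j^2 + (k + m)^2) * q ^ (k^2) = q ^ (m + (j^2 + (k + m)^2) + k^2)"
    by (simp only: power_add)
  also have "q ^ (m + (j^2 + (k + m)^2) + k^2) = q ^ (2 * k^2 + j^2) * q ^ (m * (m - 1)) * (q ^ (2 * k + 2)) ^ m"
    unfolding exponents by (simp only: power_add power_mult)
  also have "(-1) ^ m * (q ^ (2 * k^2 + j^2) * q ^ (m * (m - 1)) * (q ^ (2 * k + 2)) ^ m)
      = q ^ (2 * k^2 + j^2) * (q ^ (m * (m - 1)) * (- (q ^ (2 * k + 2))) ^ m)"
    unfolding power_minus[of "q ^ (2 * k + 2)"] by (simp only: ac_simps)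
  finally have powers: "(-q) ^ m * q ^ (j^2 + (k + m)^2) * q ^ (k^2)
      = q ^ (2 * k^2 + j^2) * (q ^ (m * (m - 1)) * (- (q ^ (2 * k + 2))) ^ m)" .
  have binomials: "qbinp q (k + m) k * qbinp q j (k + m) = qbinp q j k * qbinp q n m"
    using qbinp_mult_qbinp[OF H, of k "k + m" j] j \<open>m \<le> n\<close> by simp
  let ?Q = "qpoch2 (a^2 * q powi (2 - 2 * int j - 2 * int k) * inverse q ^ (2 * m)) q j"
  have "(-q) powi (int (k + m) - int j) * q ^ (k^2) * qbinp q (k + m) k
            * a powi (- int j) * q ^ (j^2 + (k + m)^2)
            * qpoch2 (a^2 * q powi (2 - 2 * int j - 2 * int (k + m))) q j / qfact2 q j
            * qbinp q j (k + m)
      = (-q) powi (int k - int j) * a powi (- int j) * ((-q) ^ m * q ^ (j^2 + (k + m)^2) * q ^ (k^2))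
          * (qbinp q (k + m) k * qbinp q j (k + m)) * ?Q / qfact2 q j"
    unfolding sign shift by (simp only: times_divide_eq_left times_divide_eq_right ac_simps)
  also have "\<dots> = ?rhs"
    unfolding powers binomials by (simp only: times_divide_eq_left times_divide_eq_right ac_simps)
  finally show ?thesis .
qed

theorem mainTheorem7:
  fixes a q :: "'a::field"
  fixes j k :: nat
  assumes "a \<noteq> 0" and "q \<noteq> 0"
    and "\<forall>i::nat. i \<ge> 1 \<longrightarrow> q ^ (2 * i) \<noteq> 1"
    and "k \<le> j"
  shows "(\<Sum>h=k..j. (-q) powi (int h - int j) * q ^ (k^2) * qbinp q h k
            * a powi (- int j) * q ^ (j^2 + h^2)
            * qpoch2 (a^2 * q powi (2 - 2 * int j - 2 * int h)) q j / qfact2 q j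
            * qbinp q j h)
         = (-q) powi (int k - int j) * a powi (- int j) * q ^ (2 * k^2 + j^2)
            * qbinp q j k
            * qpoch2 (a^2 * q powi (2 - 2 * int j - 2 * int k)) q k / qfact2 q k"
proof -
  note H = assms(3)
  obtain n where j: "j = k + n"
    using le_Suc_ex[OF \<open>k \<le> j\<close>] by blast
  define y where "y = a^2 * q powi (2 - 2 * int j - 2 * int k)"
  define C where "C = (-q) powi (int k - int j) * a powi (- int j) * q ^ (2 * k^2 + j^2) * qbinp q j k / qfact2 q j"
  have "(\<Sum>h=k..j. (-q) powi (int h - int j) * q ^ (k^2) * qbinp q h k
            * a powi (- int j) * q ^ (j^2 + h^2)
            * qpoch2 (a^2 * q powi (2 - 2 * int j - 2 * int h)) q j / qfact2 q j
            * qbinp q j h)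
      = (\<Sum>m\<le>n. C * (qbinp q n m * q ^ (m * (m - 1)) * (- (q ^ (2 * k + 2))) ^ m
                       * qpoch2 (y * inverse q ^ (2 * m)) q (k + n)))"
    unfolding sum.atLeastAtMost_shift_0[OF \<open>k \<le> j\<close>] atLeast0AtMost C_def y_def
    using summand_factorization[OF H \<open>q \<noteq> 0\<close> j] by (intro sum.cong) (simp_all add: j)
  also have "\<dots> = C * (qfact2 q j / qfact2 q k * qpoch2 y q k)"
    unfolding sum_distrib_left[symmetric] qpoch2_shifted_sum[OF H \<open>q \<noteq> 0\<close>] j ..
  also have "\<dots> = (-q) powi (int k - int j) * a powi (- int j) * q ^ (2 * k^2 + j^2)
            * qbinp q j k * qpoch2 y q k / qfact2 q k"
    unfolding C_def using qfact2_nonzero[OF H] by (simp add: field_simps)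
  finally show ?thesis
    unfolding y_def .
qed

end
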